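(* Let $a,b>0$ with $a+b\leq 1$, and let $c\in\mathbb{R}$. Define $$f_{a,b,c}(x)=\frac{{}_2F_1(a,b;a+b;x)}{c-\log(1-x)}.$$ Define on $[0,1)$ the functions $$h(x)=\frac{(ab)^2}{(a+b)(a+b+1)}(1-x)\,{}_2F_1(a+1,b+1;a+b+2;x)+\frac{ab}{a+b}\,{}_2F_1(a,b;a+b+1;x),$$ $$g(x)=-\Big(\frac{2ab}{a+b}\,{}_2F_1(a,b;a+b+1;x)+{}_2F_1(a,b;a+b;x)\Big),\qquad \Delta(x)=g(x)^2-8h(x)\,{}_2F_1(a,b;a+b;x),$$ $$\omega_\pm(x)=\frac{-g(x)\pm\sqrt{\Delta(x)}}{2h(x)},\qquad \varphi_\pm(x)=\log(1-x)+\omega_\pm(x),$$ and set $\alpha_0=\max_{x\in[0,1)}\varphi_+(x)$, $\delta_-=\max_{x\in[0,1)}\varphi_-(x)$, $\delta_+=\min_{x\in[0,1)}\varphi_+(x)$. Then $f_{a,b,c}$ is convex on $[0,1)$ if and only if $c\geq\alpha_0$, and $f_{a,b,c}$ is concave on $[0,1)$ if and only if $c\in[\delta_-,\delta_+]$.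
   Context: ${}_2F_1(a,b;c;x)=\sum_{n\geq0}\frac{(a)_n(b)_n}{(c)_n}\frac{x^n}{n!}$ is the Gauss hypergeometric function, with $(a)_n=\Gamma(a+n)/\Gamma(a)$. *)

theory Defs
  imports "HOL-Analysis.Analysis"
begin

text \<open>Gauss hypergeometric function 2F1(a,b;c;x) as the sum of its power series
  (used here only for 0 <= x < 1, where the series converges absolutely).\<close>
definition hyp2F1 :: "real \<Rightarrow> real \<Rightarrow> real \<Rightarrow> real \<Rightarrow> real" where
  "hyp2F1 a b c x =
     (\<Sum>n. pochhammer a n * pochhammer b n / pochhammer c n * x ^ n / fact n)"

definition f_abc :: "real \<Rightarrow> real \<Rightarrow> real \<Rightarrow> real \<Rightarrow> real" where
  "f_abc a b c x = hyp2F1 a b (a + b) x / (c - ln (1 - x))"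

definition h_fun :: "real \<Rightarrow> real \<Rightarrow> real \<Rightarrow> real" where
  "h_fun a b x = (a * b)^2 / ((a + b) * (a + b + 1)) * (1 - x) * hyp2F1 (a + 1) (b + 1) (a + b + 2) x
                 + a * b / (a + b) * hyp2F1 a b (a + b + 1) x"

definition g_fun :: "real \<Rightarrow> real \<Rightarrow> real \<Rightarrow> real" where
  "g_fun a b x = - (2 * a * b / (a + b) * hyp2F1 a b (a + b + 1) x + hyp2F1 a b (a + b) x)"

definition Delta_fun :: "real \<Rightarrow> real \<Rightarrow> real \<Rightarrow> real" where
  "Delta_fun a b x = (g_fun a b x)^2 - 8 * h_fun a b x * hyp2F1 a b (a + b) x"

definition omega_plus :: "real \<Rightarrow> real \<Rightarrow> real \<Rightarrow> real" where
  "omega_plus a b x = (- g_fun a b x + sqrt (Delta_fun a b x)) / (2 * h_fun a b x)"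

definition omega_minus :: "real \<Rightarrow> real \<Rightarrow> real \<Rightarrow> real" where
  "omega_minus a b x = (- g_fun a b x - sqrt (Delta_fun a b x)) / (2 * h_fun a b x)"

definition phi_plus :: "real \<Rightarrow> real \<Rightarrow> real \<Rightarrow> real" where
  "phi_plus a b x = ln (1 - x) + omega_plus a b x"

definition phi_minus :: "real \<Rightarrow> real \<Rightarrow> real \<Rightarrow> real" where
  "phi_minus a b x = ln (1 - x) + omega_minus a b x"

end

theory Submission
  imports Defs "HOL-Real_Asymp.Real_Asymp"
begin

text \<open>
  Write \<open>F\<close> for \<open>\<^sub>2F\<^sub>1(a, b; a + b; x)\<close> and \<open>L(x) = c - ln (1 - x)\<close>, so that \<open>f = F / L\<close>.
  The zero-balanced series satisfies \<open>(1 - x) F' = G\<close> and \<open>G' = W\<close>, where \<open>G\<close> and \<open>W\<close> are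
  multiples of \<open>\<^sub>2F\<^sub>1(a, b; a + b + 1; x)\<close> and \<open>\<^sub>2F\<^sub>1(a + 1, b + 1; a + b + 2; x)\<close>; hence
  \<open>f'' = (h L\<^sup>2 + g L + 2 F) / ((1 - x)\<^sup>2 L\<^sup>3)\<close>, a quadratic in \<open>L\<close> with roots \<open>\<omega>\<^sub>\<plusminus>\<close>.
  For \<open>c > 0\<close> we have \<open>L > 0\<close>, so \<open>f'' \<ge> 0\<close> at \<open>x\<close> iff \<open>c \<ge> \<phi>\<^sub>+(x)\<close> or \<open>c \<le> \<phi>\<^sub>-(x)\<close>, and
  \<open>f'' \<le> 0\<close> iff \<open>\<phi>\<^sub>-(x) \<le> c \<le> \<phi>\<^sub>+(x)\<close>. In the convex case the branch \<open>c \<le> \<phi>\<^sub>-\<close> is ruled out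
  by continuity: \<open>\<phi>\<^sub>- < \<phi>\<^sub>+\<close> on \<open>(0, 1)\<close> and \<open>\<phi>\<^sub>-(x) \<le> ln (1 - x) + 4 \<rightarrow> -\<infinity>\<close>.
  For \<open>c \<le> 0\<close>, \<open>f\<close> has a pole at \<open>1 - e\<^sup>c \<in> [0, 1)\<close> and is neither convex nor concave,
  while \<open>\<phi>\<^sub>\<plusminus>(0) > 0\<close>. Positivity of the coefficients of the three series, and the bound
  \<open>(n + 6) w\<^sub>n \<le> 6\<close> on the coefficients \<open>w\<^sub>n\<close> of \<open>W\<close>, give \<open>h > 0\<close>, \<open>\<Delta> > 0\<close> on \<open>(0, 1)\<close> and the bounds
  making \<open>\<alpha>\<^sub>0\<close>, \<open>\<delta>\<^sub>-\<close>, \<open>\<delta>\<^sub>+\<close> finite.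
\<close>

section \<open>Power series and the logarithm\<close>

lemma sums_one_minus_mult:
  fixes d :: "nat \<Rightarrow> real"
  assumes "(\<lambda>n. d n * x ^ n) sums S"
  shows "(\<lambda>n. (d n - (if n = 0 then 0 else d (n - 1))) * x ^ n) sums ((1 - x) * S)"
proof -
  define e where "e n = (if n = 0 then 0 else d (n - 1) * x ^ n)" for n
  have "(\<lambda>n. e (Suc n)) sums (x * S)"
    using sums_mult[OF assms, of x] by (simp add: e_def mult_ac)
  then have "e sums (x * S + e 0)"
    by (rule sums_Suc)
  then have "e sums (x * S)"
    by (simp add: e_def)
  have "(\<lambda>n. d n * x ^ n - e n) sums (S - x * S)"
    using assms \<open>e sums (x * S)\<close> by (rule sums_diff)
  moreover have "(\<lambda>n. d n * x ^ n - e n) = (\<lambda>n. (d n - (if n = 0 then 0 else d (n - 1))) * x ^ n)"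
    by (auto simp: e_def algebra_simps)
  ultimately show ?thesis
    by (simp add: algebra_simps)
qed

lemma one_minus_mult_suminf_le:
  fixes d :: "nat \<Rightarrow> real"
  assumes "summable (\<lambda>n. d n * x ^ n)" "0 \<le> x" "\<And>n. 1 \<le> n \<Longrightarrow> d (Suc n) \<le> d n"
  shows "(1 - x) * (\<Sum>n. d n * x ^ n) \<le> d 0 - (d 0 - d 1) * x"
proof -
  define e where "e n = (d n - (if n = 0 then 0 else d (n - 1))) * x ^ n" for n
  have e: "e sums ((1 - x) * (\<Sum>n. d n * x ^ n))"
    unfolding e_def by (intro sums_one_minus_mult summable_sums assms(1))
  have "(\<Sum>n<2. - e n) \<le> (\<Sum>n. - e n)"
  proof (intro sum_le_suminf summable_minus)
    show "summable e"
      using e by (simp add: sums_iff)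
    fix n :: nat
    assume "n \<in> - {..<2}"
    then obtain m where "n = Suc m" "1 \<le> m"
      by (cases n) auto
    then show "0 \<le> - e n"
      using assms by (simp add: e_def mult_nonpos_nonneg)
  qed simp
  then have "(\<Sum>n. e n) \<le> (\<Sum>n<2. e n)"
    using e by (simp add: suminf_minus sums_iff sum_negf)
  moreover have "(\<Sum>n<2. e n) = d 0 - (d 0 - d 1) * x"
    by (simp add: e_def numeral_2_eq_2 algebra_simps)
  ultimately show ?thesis
    using e by (simp add: sums_iff)
qed

lemma suminf_le_ln:
  fixes d :: "nat \<Rightarrow> real"
  assumes "summable (\<lambda>n. d n * x ^ n)" "0 \<le> x" "x < 1" "\<And>n. 1 \<le> n \<Longrightarrow> n * d n \<le> K"
  shows "(\<Sum>n. d n * x ^ n) \<le> d 0 - K * ln (1 - x)"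
proof -
  have "(\<lambda>n. - ((- (- x)) ^ n) / n) sums ln (1 + - x)"
    using assms by (intro ln_series') auto
  from sums_minus[OF this] have "(\<lambda>n. x ^ n / n) sums - ln (1 - x)"
    by simp
  \<comment> \<open>For \<open>n = 0\<close> the summand \<open>x ^ n / n\<close> is \<open>1 / 0 = 0\<close>.\<close>
  from sums_add[OF sums_single[of 0 "\<lambda>_. d 0"] sums_mult[OF this, of K]]
  have bound_sums: "(\<lambda>n. (if n = 0 then d 0 else 0) + K * (x ^ n / n)) sums (d 0 - K * ln (1 - x))"
    by simp
  have "d n * x ^ n \<le> (if n = 0 then d 0 else 0) + K * (x ^ n / n)" for n
  proof (cases "n = 0")
    case False
    then have "d n \<le> K / n"
      using assms(4)[of n] by (simp add: field_simps)
    then have "d n * x ^ n \<le> K / n * x ^ n"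
      by (rule mult_right_mono) (use assms(2) in simp)
    then show ?thesis
      using False by simp
  qed simp
  then show ?thesis
    using summable_sums[OF assms(1)] bound_sums by (rule sums_le)
qed

lemma ln_one_minus_has_real_derivative:
  "x < 1 \<Longrightarrow> ((\<lambda>x. ln (1 - x)) has_real_derivative - 1 / (1 - x)) (at x)"
  by (auto intro!: derivative_eq_intros)

lemma one_minus_mult_ln_le:
  fixes x :: real
  assumes "0 \<le> x" "x < 1"
  shows "(1 - x) * - ln (1 - x) \<le> 1" "(1 - x) * ln (1 - x) ^ 2 \<le> 4"
proof -
  define y where "y = - ln (1 - x)"
  have y: "0 \<le> y" "1 - x = exp (- y)"
    using assms by (simp_all add: y_def)
  have "y \<le> exp y"
    using exp_ge_add_one_self[of y] by linarith
  then have "y * exp (- y) \<le> 1"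
    by (simp add: exp_minus field_simps)
  then show "(1 - x) * - ln (1 - x) \<le> 1"
    unfolding y(2) y_def[symmetric] by (simp add: mult.commute)
  have "(1 + y / 2) ^ 2 \<le> exp (y / 2) ^ 2"
    using y(1) exp_ge_add_one_self[of "y / 2"] by (intro power_mono) auto
  also have "exp (y / 2) ^ 2 = exp y"
    by (simp add: power2_eq_square exp_add[symmetric])
  finally have "y ^ 2 \<le> 4 * exp y"
    using y(1) by (simp add: power2_eq_square algebra_simps)
  then have "y ^ 2 * exp (- y) \<le> 4"
    by (simp add: exp_minus field_simps)
  then show "(1 - x) * ln (1 - x) ^ 2 \<le> 4"
    unfolding y(2) y_def[symmetric] by (simp add: mult.commute)
qed

section \<open>The Gauss hypergeometric series\<close>

definition hyp2F1_coeff :: "real \<Rightarrow> real \<Rightarrow> real \<Rightarrow> nat \<Rightarrow> real" where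
  "hyp2F1_coeff a b c n = pochhammer a n * pochhammer b n / (pochhammer c n * fact n)"

lemma hyp2F1_eq_suminf: "hyp2F1 a b c x = (\<Sum>n. hyp2F1_coeff a b c n * x ^ n)"
  unfolding hyp2F1_def hyp2F1_coeff_def by (simp add: field_simps)

lemma hyp2F1_coeff_0 [simp]: "hyp2F1_coeff a b c 0 = 1"
  by (simp add: hyp2F1_coeff_def)

lemma hyp2F1_0 [simp]: "hyp2F1 a b c 0 = 1"
  by (simp add: hyp2F1_eq_suminf)

lemma hyp2F1_coeff_pos: "0 < a \<Longrightarrow> 0 < b \<Longrightarrow> 0 < c \<Longrightarrow> 0 < hyp2F1_coeff a b c n"
  unfolding hyp2F1_coeff_def by (simp add: pochhammer_pos)

lemma hyp2F1_coeff_Suc: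
  assumes "0 < c"
  shows "hyp2F1_coeff a b c (Suc n)
    = hyp2F1_coeff a b c n * ((a + real n) * (b + real n) / ((c + real n) * (real n + 1)))"
proof -
  have "pochhammer c n > 0" "c + n > 0" using assms by (simp_all add: pochhammer_pos)
  then show ?thesis
    unfolding hyp2F1_coeff_def by (simp add: pochhammer_Suc field_simps)
qed

lemma hyp2F1_coeff_Suc_c:
  assumes "0 < c"
  shows "hyp2F1_coeff a b (c + 1) n = c / (c + real n) * hyp2F1_coeff a b c n"
proof -
  have "pochhammer c n * (c + real n) = c * pochhammer (c + 1) n"
    by (metis pochhammer_Suc pochhammer_rec)
  moreover have "pochhammer c n > 0" "pochhammer (c + 1) n > 0" "c + n > 0"
    using assms by (simp_all add: pochhammer_pos)
  ultimately show ?thesis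
    using assms unfolding hyp2F1_coeff_def by (simp add: field_simps)
qed

lemma diffs_hyp2F1_coeff:
  assumes "0 < c"
  shows "diffs (hyp2F1_coeff a b c) n = a * b / c * hyp2F1_coeff (a + 1) (b + 1) (c + 1) n"
proof -
  have "pochhammer (c + 1) n \<noteq> 0" "c \<noteq> 0" "1 + real n \<noteq> 0"
    using assms by (auto simp: pochhammer_eq_0_iff)
  then show ?thesis
    unfolding hyp2F1_coeff_def diffs_def
    by (simp only: pochhammer_rec fact_Suc) (simp add: divide_simps)
qed

lemma conv_radius_hyp2F1_coeff:
  assumes "0 < a" "0 < b" "0 < c"
  shows "conv_radius (hyp2F1_coeff a b c) = 1"
proof (rule conv_radius_ratio_limit_nonzero[of _ 1])
  have ratio: "norm (hyp2F1_coeff a b c n) / norm (hyp2F1_coeff a b c (Suc n))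
          = (c + real n) * (real n + 1) / ((a + real n) * (b + real n))" for n
  proof -
    define q where "q = (a + real n) * (b + real n) / ((c + real n) * (real n + 1))"
    have "q > 0" "hyp2F1_coeff a b c n > 0"
      using assms by (simp_all add: q_def hyp2F1_coeff_pos)
    moreover have "hyp2F1_coeff a b c (Suc n) = hyp2F1_coeff a b c n * q"
      unfolding q_def by (rule hyp2F1_coeff_Suc[OF assms(3)])
    ultimately have "norm (hyp2F1_coeff a b c n) / norm (hyp2F1_coeff a b c (Suc n)) = 1 / q"
      by (simp add: abs_mult)
    then show ?thesis
      by (simp add: q_def)
  qed
  show "(\<lambda>n. norm (hyp2F1_coeff a b c n) / norm (hyp2F1_coeff a b c (Suc n))) \<longlonglongrightarrow> 1"
    unfolding ratio using assms by real_asymp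
qed (simp_all add: one_ereal_def)

lemma summable_hyp2F1:
  assumes "0 < a" "0 < b" "0 < c" "\<bar>x\<bar> < 1"
  shows "summable (\<lambda>n. hyp2F1_coeff a b c n * x ^ n)"
  by (rule summable_in_conv_radius) (use assms in \<open>simp add: conv_radius_hyp2F1_coeff\<close>)

lemma hyp2F1_has_real_derivative:
  assumes "0 < a" "0 < b" "0 < c" "\<bar>x\<bar> < 1"
  shows "(hyp2F1 a b c has_real_derivative a * b / c * hyp2F1 (a + 1) (b + 1) (c + 1) x) (at x)"
proof -
  have "(\<Sum>n. diffs (hyp2F1_coeff a b c) n * x ^ n)
      = (\<Sum>n. a * b / c * (hyp2F1_coeff (a + 1) (b + 1) (c + 1) n * x ^ n))"
    by (simp only: diffs_hyp2F1_coeff[OF assms(3)] mult.assoc)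
  also have "\<dots> = a * b / c * hyp2F1 (a + 1) (b + 1) (c + 1) x"
    unfolding hyp2F1_eq_suminf using assms by (intro suminf_mult summable_hyp2F1) auto
  finally have "(\<Sum>n. diffs (hyp2F1_coeff a b c) n * x ^ n) = \<dots>" .
  moreover have "((\<lambda>x. \<Sum>n. hyp2F1_coeff a b c n * x ^ n) has_real_derivative
          (\<Sum>n. diffs (hyp2F1_coeff a b c) n * x ^ n)) (at x)"
    by (rule has_field_derivative_powser) (use assms in \<open>simp add: conv_radius_hyp2F1_coeff\<close>)
  ultimately show ?thesis
    by (simp add: hyp2F1_eq_suminf[abs_def])
qed

lemma isCont_hyp2F1: "0 < a \<Longrightarrow> 0 < b \<Longrightarrow> 0 < c \<Longrightarrow> \<bar>x\<bar> < 1 \<Longrightarrow> isCont (hyp2F1 a b c) x"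
  by (rule DERIV_isCont[OF hyp2F1_has_real_derivative])

lemma hyp2F1_ge_linear:
  assumes "0 < a" "0 < b" "0 < c" "0 \<le> x" "x < 1"
  shows "1 + a * b / c * x \<le> hyp2F1 a b c x"
proof -
  have "(\<Sum>n<2. hyp2F1_coeff a b c n * x ^ n) \<le> (\<Sum>n. hyp2F1_coeff a b c n * x ^ n)"
    using assms by (intro sum_le_suminf summable_hyp2F1)
      (auto intro!: mult_nonneg_nonneg less_imp_le[OF hyp2F1_coeff_pos])
  then show ?thesis
    using assms by (simp add: hyp2F1_eq_suminf numeral_2_eq_2 hyp2F1_coeff_Suc)
qed

lemma hyp2F1_ge_one: "0 < a \<Longrightarrow> 0 < b \<Longrightarrow> 0 < c \<Longrightarrow> 0 \<le> x \<Longrightarrow> x < 1 \<Longrightarrow> 1 \<le> hyp2F1 a b c x"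
  by (rule order_trans[OF _ hyp2F1_ge_linear]) auto

lemma hyp2F1_Suc_c_le:
  assumes "0 < a" "0 < b" "0 < c" "0 \<le> x" "x < 1"
  shows "hyp2F1 a b (c + 1) x \<le> hyp2F1 a b c x"
  unfolding hyp2F1_eq_suminf
proof (intro suminf_le summable_hyp2F1)
  fix n
  have "c / (c + real n) * hyp2F1_coeff a b c n \<le> hyp2F1_coeff a b c n"
    using assms hyp2F1_coeff_pos[of a b c n] by (intro mult_left_le_one_le) auto
  then show "hyp2F1_coeff a b (c + 1) n * x ^ n \<le> hyp2F1_coeff a b c n * x ^ n"
    unfolding hyp2F1_coeff_Suc_c[OF assms(3)] using assms by (intro mult_right_mono) auto
qed (use assms in auto)

text \<open>The case \<open>C = A + B - 1\<close> of Euler's transformation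
  \<open>\<^sub>2F\<^sub>1(A, B; C; x) = (1 - x)\<^bsup>C - A - B\<^esup> \<^sub>2F\<^sub>1(C - A, C - B; C; x)\<close>.\<close>

lemma hyp2F1_Euler_special:
  assumes "0 < a" "0 < b" "\<bar>x\<bar> < 1"
  shows "(1 - x) * hyp2F1 (a + 1) (b + 1) (a + b + 1) x = hyp2F1 a b (a + b + 1) x"
proof -
  let ?P = "hyp2F1_coeff (a + 1) (b + 1) (a + b + 1)"
  let ?Q = "hyp2F1_coeff a b (a + b + 1)"
  have "?P (Suc m) - ?P m = ?Q (Suc m)" for m
  proof -
    have pos: "a + b + 1 > 0" "a + b + 1 + m > 0" "real m + 1 > 0"
      using assms by simp_all
    have "(m + 1) * ?Q (Suc m) = diffs ?Q m"
      by (simp add: diffs_def)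
    also have "\<dots> = a * b / (a + b + 1) * hyp2F1_coeff (a + 1) (b + 1) (a + b + 1 + 1) m"
      using pos by (intro diffs_hyp2F1_coeff) simp
    also have "\<dots> = a * b / (a + b + 1) * ((a + b + 1) / (a + b + 1 + m) * ?P m)"
      using pos by (subst hyp2F1_coeff_Suc_c) simp_all
    also have "\<dots> = a * b / (a + b + 1 + m) * ?P m"
      using pos by (simp add: divide_simps)
    finally have "?Q (Suc m) = a * b / ((a + b + 1 + m) * (m + 1)) * ?P m"
      using pos by (simp add: divide_simps mult_ac)
    also have "\<dots> = ?P (Suc m) - ?P m"
      using pos by (simp add: hyp2F1_coeff_Suc divide_simps) (simp add: algebra_simps)
    finally show ?thesis ..
  qed
  then have "?P n - (if n = 0 then 0 else ?P (n - 1)) = ?Q n" for n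
    by (cases n) simp_all
  moreover have "(\<lambda>n. ?P n * x ^ n) sums hyp2F1 (a + 1) (b + 1) (a + b + 1) x"
    unfolding hyp2F1_eq_suminf using assms by (intro summable_sums summable_hyp2F1) auto
  ultimately have "(\<lambda>n. ?Q n * x ^ n) sums ((1 - x) * hyp2F1 (a + 1) (b + 1) (a + b + 1) x)"
    using sums_one_minus_mult by fastforce
  then show ?thesis
    by (simp add: hyp2F1_eq_suminf sums_iff)
qed

lemma zero_balanced_hyp2F1_has_real_derivative:
  assumes "0 < a" "0 < b" "\<bar>x\<bar> < 1"
  shows "(hyp2F1 a b (a + b) has_real_derivative
           a * b / (a + b) * hyp2F1 a b (a + b + 1) x / (1 - x)) (at x)"
proof -
  have "hyp2F1 (a + 1) (b + 1) (a + b + 1) x = hyp2F1 a b (a + b + 1) x / (1 - x)"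
    using hyp2F1_Euler_special[OF assms] assms by (simp add: field_simps)
  then show ?thesis
    using hyp2F1_has_real_derivative[of a b "a + b" x] assms by simp
qed

lemma mult_roots_nonneg_iff:
  fixes h p m y :: real
  assumes "0 < h" "m \<le> p"
  shows "0 \<le> h * (y - p) * (y - m) \<longleftrightarrow> p \<le> y \<or> y \<le> m"
proof -
  have "0 \<le> h * (y - p) * (y - m) \<longleftrightarrow> 0 \<le> (y - p) * (y - m)"
    using assms(1) by (simp add: mult.assoc zero_le_mult_iff)
  also have "\<dots> \<longleftrightarrow> p \<le> y \<or> y \<le> m"
    using assms(2) by (auto simp: zero_le_mult_iff)
  finally show ?thesis .
qed

lemma mult_roots_nonpos_iff:
  fixes h p m y :: real
  assumes "0 < h" "m \<le> p"
  shows "h * (y - p) * (y - m) \<le> 0 \<longleftrightarrow> m \<le> y \<and> y \<le> p"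
proof -
  have "h * (y - p) * (y - m) \<le> 0 \<longleftrightarrow> (y - p) * (y - m) \<le> 0"
    using assms(1) by (simp add: mult.assoc mult_le_0_iff)
  also have "\<dots> \<longleftrightarrow> m \<le> y \<and> y \<le> p"
    using assms(2) by (auto simp: mult_le_0_iff)
  finally show ?thesis .
qed

lemma convex_on_deriv2_nonneg:
  fixes f :: "real \<Rightarrow> real"
  assumes "convex_on I f" "convex I"
    and "\<And>y. y \<in> interior I \<Longrightarrow> (f has_real_derivative f' y) (at y)"
    and "(f' has_real_derivative f'' x) (at x)" "x \<in> interior I"
  shows "0 \<le> f'' x"
proof (rule mono_on_imp_deriv_nonneg[where A = "interior I" and x = x])
  have tangent: "f' y * (z - y) \<le> f z - f y" if "y \<in> interior I" "z \<in> interior I" for y z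
  proof (rule convex_on_imp_above_tangent[OF assms(1) convex_connected[OF assms(2)]])
    show "z \<in> I"
      using that(2) interior_subset by blast
    show "(f has_field_derivative f' y) (at y within I)"
      using assms(3)[OF that(1)] by (rule has_field_derivative_at_within)
  qed (rule that(1))
  show "mono_on (interior I) f'"
  proof (rule mono_onI)
    fix y z
    assume yz: "y \<in> interior I" "z \<in> interior I" "y \<le> z"
    have "f' y * (z - y) \<le> f' z * (z - y)"
      using tangent[OF yz(1,2)] tangent[OF yz(2,1)] by (simp add: algebra_simps)
    then show "f' y \<le> f' z"
      using yz(3) by (cases "y = z") (auto simp: mult_le_cancel_right)
  qed
qed (use assms(4,5) in simp_all)

lemma concave_on_deriv2_nonpos:
  fixes f :: "real \<Rightarrow> real"
  assumes "concave_on I f" "convex I"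
    and "\<And>y. y \<in> interior I \<Longrightarrow> (f has_real_derivative f' y) (at y)"
    and "(f' has_real_derivative f'' x) (at x)" "x \<in> interior I"
  shows "f'' x \<le> 0"
proof -
  have "0 \<le> - f'' x"
  proof (rule convex_on_deriv2_nonneg[where f = "\<lambda>x. - f x" and f' = "\<lambda>x. - f' x"
        and f'' = "\<lambda>x. - f'' x" and x = x])
    show "convex_on I (\<lambda>x. - f x)"
      using assms(1) by (simp add: concave_on_def)
    show "((\<lambda>x. - f x) has_real_derivative - f' y) (at y)" if "y \<in> interior I" for y
      using assms(3)[OF that] by (rule DERIV_minus)
    show "((\<lambda>x. - f' x) has_real_derivative - f'' x) (at x)"
      using assms(4) by (rule DERIV_minus)
  qed (use assms(2,5) in simp_all)
  then show ?thesis
    by simp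
qed

lemma convex_on_bdd_above_Icc:
  fixes f :: "real \<Rightarrow> real"
  assumes "convex_on {p..q} f"
  shows "bdd_above (f ` {p..q})"
  by (rule bdd_aboveI2[where M = "max (f p) (f q)"]) (rule convex_on_le_max[OF assms])

lemma concave_on_bdd_above_Icc:
  fixes f :: "real \<Rightarrow> real"
  assumes "concave_on {p..q} f" "z < q"
  shows "bdd_above (f ` {p..z})"
proof (rule bdd_aboveI2)
  fix y
  assume y: "y \<in> {p..z}"
  have "concave_on {y..q} f"
    unfolding concave_on_def
    by (rule convex_on_subset[OF assms(1)[unfolded concave_on_def]]) (use y in auto)
  then have "(f y - f q) / (q - y) * (q - z) + f q \<le> f z"
    using y assms by (intro concave_onD_Icc'') auto
  then have "(f y - f q) * (q - z) \<le> (f z - f q) * (q - y)"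
    using y assms by (simp add: field_simps)
  also have "\<dots> \<le> \<bar>f z - f q\<bar> * (q - p)"
    using y assms by (intro mult_mono) auto
  finally show "f y \<le> \<bar>f z - f q\<bar> * (q - p) / (q - z) + f q"
    using assms by (simp add: field_simps)
qed

lemma isCont_le_at_left_endpoint:
  fixes \<phi> :: "real \<Rightarrow> real"
  assumes "isCont \<phi> p" "p < q" "\<And>x. x \<in> {p<..<q} \<Longrightarrow> \<phi> x \<le> c"
  shows "\<phi> p \<le> c"
proof (rule tendsto_upperbound)
  show "(\<phi> \<longlongrightarrow> \<phi> p) (at_right p)"
    using assms(1) unfolding isCont_def by (rule tendsto_mono[OF at_le, rotated]) simp
  show "\<forall>\<^sub>F x in at_right p. \<phi> x \<le> c"
    using eventually_at_right_real[OF assms(2)] by eventually_elim (use assms(3) in auto)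
qed simp

lemma isCont_ge_at_left_endpoint:
  fixes \<phi> :: "real \<Rightarrow> real"
  assumes "isCont \<phi> p" "p < q" "\<And>x. x \<in> {p<..<q} \<Longrightarrow> c \<le> \<phi> x"
  shows "c \<le> \<phi> p"
proof -
  have "- \<phi> p \<le> - c"
    by (rule isCont_le_at_left_endpoint[where q = q]) (use assms in auto)
  then show ?thesis
    by simp
qed

lemma connected_upper_branch_le:
  fixes lo hi :: "real \<Rightarrow> real"
  assumes "connected I" "continuous_on I lo" "continuous_on I hi"
    and "\<And>x. x \<in> I \<Longrightarrow> lo x < hi x"
    and "\<And>x. x \<in> I \<Longrightarrow> hi x \<le> c \<or> c \<le> lo x"
    and "x0 \<in> I" "lo x0 < c" "x \<in> I"
  shows "hi x \<le> c"
proof (rule ccontr)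
  assume "\<not> hi x \<le> c"
  then have "c \<le> lo x"
    using assms(5,8) by auto
  define t where "t y = (c - lo y) / (hi y - lo y)" for y
  have "continuous_on I t"
    unfolding t_def using assms(2-4) by (intro continuous_intros) force+
  then have "connected (t ` I)"
    using assms(1) by (rule connected_continuous_image)
  moreover have "t x \<le> 0"
    using \<open>c \<le> lo x\<close> assms(4)[OF assms(8)] by (simp add: t_def divide_nonpos_pos)
  moreover have "1 \<le> t x0"
    using assms(4-7) by (fastforce simp: t_def)
  ultimately have "1 / 2 \<in> t ` I"
    using assms(6,8) unfolding connected_iff_interval by fastforce
  then obtain z where z: "z \<in> I" "t z = 1 / 2"
    by (metis imageE)
  then have "lo z < c \<and> c < hi z"
    using assms(4)[OF z(1)] by (simp add: t_def field_simps)
  then show False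
    using assms(5)[OF z(1)] by auto
qed

section \<open>The zero-balanced function and its convexity\<close>

locale zero_balanced =
  fixes a b :: real
  assumes a_pos: "0 < a" and b_pos: "0 < b" and a_plus_b_le_1: "a + b \<le> 1"
begin

abbreviation F :: "real \<Rightarrow> real" where
  "F \<equiv> hyp2F1 a b (a + b)"

definition \<rho> :: real where
  "\<rho> = a * b / (a + b)"

definition \<kappa> :: real where
  "\<kappa> = (a * b)\<^sup>2 / ((a + b) * (a + b + 1))"

definition G :: "real \<Rightarrow> real" where
  "G x = \<rho> * hyp2F1 a b (a + b + 1) x"

definition W :: "real \<Rightarrow> real" where
  "W x = \<kappa> * hyp2F1 (a + 1) (b + 1) (a + b + 2) x"

lemma h_fun_eq: "h_fun a b x = G x + (1 - x) * W x"
  unfolding h_fun_def G_def W_def \<rho>_def \<kappa>_def by (simp add: algebra_simps)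

lemma g_fun_eq: "g_fun a b x = - (2 * G x + F x)"
  unfolding g_fun_def G_def \<rho>_def by (simp add: algebra_simps)

lemma Delta_fun_eq: "Delta_fun a b x = (F x - 2 * G x)\<^sup>2 - 8 * ((1 - x) * W x) * F x"
  unfolding Delta_fun_def g_fun_eq h_fun_eq by (simp add: power2_eq_square algebra_simps)

lemma four_ab_le_a_plus_b: "4 * (a * b) \<le> a + b"
proof -
  have "4 * (a * b) \<le> (a + b)\<^sup>2"
    using zero_le_power2[of "a - b"] by (simp add: power2_eq_square algebra_simps)
  also have "\<dots> \<le> a + b"
    using a_pos b_pos a_plus_b_le_1 by (simp add: power2_eq_square mult_left_le)
  finally show ?thesis .
qed

lemma ab_le_quarter: "a * b \<le> 1 / 4"
  using four_ab_le_a_plus_b a_plus_b_le_1 by simp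

lemma rho_pos: "0 < \<rho>"
  using a_pos b_pos by (simp add: \<rho>_def)

lemma rho_le_quarter: "\<rho> \<le> 1 / 4"
  using four_ab_le_a_plus_b a_pos b_pos by (simp add: \<rho>_def field_simps)

lemma kappa_pos: "0 < \<kappa>"
  using a_pos b_pos by (simp add: \<kappa>_def)

lemma eight_kappa_le: "8 * \<kappa> \<le> (1 - 2 * \<rho>)\<^sup>2"
proof -
  define s p where "s = a + b" and "p = a * b"
  have s: "0 < s" "s \<le> 1" and p: "0 < p" "4 * p \<le> s"
    using a_pos b_pos a_plus_b_le_1 four_ab_le_a_plus_b by (simp_all add: s_def p_def)
  have "(2 * p)\<^sup>2 \<le> (s - 2 * p)\<^sup>2"
    using p by (intro power_mono) auto
  then have "(2 * p)\<^sup>2 * (2 * s) \<le> (s - 2 * p)\<^sup>2 * (s + 1)"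
    using s by (intro mult_mono) auto
  then have "(2 * p)\<^sup>2 * (2 * s) / (s\<^sup>2 * (s + 1)) \<le> (s - 2 * p)\<^sup>2 * (s + 1) / (s\<^sup>2 * (s + 1))"
    using s by (intro divide_right_mono) auto
  moreover have "(2 * p)\<^sup>2 * (2 * s) / (s\<^sup>2 * (s + 1)) = 8 * (p\<^sup>2 / (s * (s + 1)))"
    using s by (simp add: divide_simps power2_eq_square)
  moreover have "(s - 2 * p)\<^sup>2 * (s + 1) / (s\<^sup>2 * (s + 1)) = (1 - 2 * (p / s))\<^sup>2"
    using s by (simp add: divide_simps power2_eq_square)
  ultimately show ?thesis
    by (simp add: \<kappa>_def \<rho>_def s_def p_def)
qed

lemma F_has_real_derivative: "\<bar>x\<bar> < 1 \<Longrightarrow> (F has_real_derivative G x / (1 - x)) (at x)"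
  using zero_balanced_hyp2F1_has_real_derivative[OF a_pos b_pos] by (simp add: G_def \<rho>_def)

lemma G_has_real_derivative:
  assumes "\<bar>x\<bar> < 1"
  shows "(G has_real_derivative W x) (at x)"
proof -
  have "(hyp2F1 a b (a + b + 1) has_real_derivative
          a * b / (a + b + 1) * hyp2F1 (a + 1) (b + 1) (a + b + 2) x) (at x)"
    using hyp2F1_has_real_derivative[of a b "a + b + 1" x] assms a_pos b_pos
    by (simp add: add.assoc)
  from DERIV_cmult[OF this, of \<rho>] show ?thesis
    using a_pos b_pos
    by (simp add: G_def[abs_def] W_def \<rho>_def \<kappa>_def power2_eq_square field_simps)
qed

lemma isCont_F: "\<bar>x\<bar> < 1 \<Longrightarrow> isCont F x"
  using DERIV_isCont[OF F_has_real_derivative] .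

lemma isCont_G: "\<bar>x\<bar> < 1 \<Longrightarrow> isCont G x"
  using DERIV_isCont[OF G_has_real_derivative] .

lemma isCont_W: "\<bar>x\<bar> < 1 \<Longrightarrow> isCont W x"
  unfolding W_def[abs_def] using a_pos b_pos by (intro continuous_intros isCont_hyp2F1) auto

lemma F_ge_linear: "0 \<le> x \<Longrightarrow> x < 1 \<Longrightarrow> 1 + \<rho> * x \<le> F x"
  using hyp2F1_ge_linear[OF a_pos b_pos] a_pos b_pos by (simp add: \<rho>_def)

lemma F_ge_one: "0 \<le> x \<Longrightarrow> x < 1 \<Longrightarrow> 1 \<le> F x"
  using hyp2F1_ge_one a_pos b_pos by simp

lemma rho_le_G: "0 \<le> x \<Longrightarrow> x < 1 \<Longrightarrow> \<rho> \<le> G x"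
  using hyp2F1_ge_one[of a b "a + b + 1" x] a_pos b_pos rho_pos by (simp add: G_def)

lemma G_le_rho_mult_F: "0 \<le> x \<Longrightarrow> x < 1 \<Longrightarrow> G x \<le> \<rho> * F x"
  using hyp2F1_Suc_c_le[of a b "a + b" x] a_pos b_pos rho_pos by (simp add: G_def)

lemma W_nonneg: "0 \<le> x \<Longrightarrow> x < 1 \<Longrightarrow> 0 \<le> W x"
  using hyp2F1_ge_one[of "a + 1" "b + 1" "a + b + 2" x] a_pos b_pos kappa_pos by (simp add: W_def)

lemma W_coeff_Suc_le:
  "hyp2F1_coeff (a + 1) (b + 1) (a + b + 2) (Suc n) \<le> hyp2F1_coeff (a + 1) (b + 1) (a + b + 2) n"
proof -
  have "(a + 1 + real n) * (b + 1 + real n) \<le> (a + b + 2 + real n) * (real n + 1)"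
    using ab_le_quarter by (simp add: algebra_simps)
  then have "(a + 1 + real n) * (b + 1 + real n) / ((a + b + 2 + real n) * (real n + 1)) \<le> 1"
    using a_pos b_pos by (simp add: divide_le_eq_1)
  moreover have "0 < a + b + 2"
    using a_pos b_pos by simp
  ultimately show ?thesis
    using a_pos b_pos hyp2F1_coeff_pos[of "a + 1" "b + 1" "a + b + 2" n]
    by (simp only: hyp2F1_coeff_Suc) (intro mult_left_le, auto)
qed

lemma W_coeff_bound: "(real n + 6) * hyp2F1_coeff (a + 1) (b + 1) (a + b + 2) n \<le> 6"
proof (induction n)
  case (Suc n)
  let ?d = "hyp2F1_coeff (a + 1) (b + 1) (a + b + 2)"
  have "(real n + 7) * ((a + 1 + real n) * (b + 1 + real n))
      \<le> (real n + 6) * ((a + b + 2 + real n) * (real n + 1))"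
  proof -
    have "(real n + 6) * ((a + b + 2 + real n) * (real n + 1))
          - (real n + 7) * ((a + 1 + real n) * (b + 1 + real n))
          = (5 - (a + b) - a * b) * n + (5 - (a + b) - 7 * (a * b))"
      by (simp add: algebra_simps)
    also have "\<dots> \<ge> 0"
      using a_plus_b_le_1 ab_le_quarter by (intro add_nonneg_nonneg mult_nonneg_nonneg) auto
    finally show ?thesis
      by simp
  qed
  then have "(real n + 7) * ((a + 1 + real n) * (b + 1 + real n))
      / ((a + b + 2 + real n) * (real n + 1)) \<le> real n + 6"
    using a_pos b_pos by (simp add: divide_le_eq)
  then have "?d n * ((real n + 7) * ((a + 1 + real n) * (b + 1 + real n))
      / ((a + b + 2 + real n) * (real n + 1))) \<le> ?d n * (real n + 6)"
    using a_pos b_pos hyp2F1_coeff_pos[of "a + 1" "b + 1" "a + b + 2" n] by (intro mult_left_mono) auto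
  then have "(real (Suc n) + 6) * ?d (Suc n) \<le> (real n + 6) * ?d n"
    using a_pos b_pos by (simp add: hyp2F1_coeff_Suc algebra_simps)
  with Suc.IH show ?case
    by linarith
qed simp

lemma one_minus_mult_W_le:
  assumes "0 \<le> x" "x < 1"
  shows "(1 - x) * W x \<le> \<kappa> * (1 - (1 - a * b) / (a + b + 2) * x)"
proof -
  let ?d = "hyp2F1_coeff (a + 1) (b + 1) (a + b + 2)"
  have "(1 - x) * (\<Sum>n. ?d n * x ^ n) \<le> ?d 0 - (?d 0 - ?d 1) * x"
    using assms a_pos b_pos W_coeff_Suc_le
    by (intro one_minus_mult_suminf_le summable_hyp2F1) auto
  also have "?d 0 - (?d 0 - ?d 1) * x = 1 - (1 - a * b) / (a + b + 2) * x"
    using a_pos b_pos hyp2F1_coeff_Suc[of "a + b + 2" "a + 1" "b + 1" 0]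
    by (simp add: field_simps)
  finally show ?thesis
    using kappa_pos by (simp add: W_def hyp2F1_eq_suminf mult.left_commute mult_left_mono)
qed

lemma W_le_ln:
  assumes "0 \<le> x" "x < 1"
  shows "W x \<le> \<kappa> * (1 - 6 * ln (1 - x))"
proof -
  let ?d = "hyp2F1_coeff (a + 1) (b + 1) (a + b + 2)"
  have "n * ?d n \<le> 6" for n
    using W_coeff_bound[of n] hyp2F1_coeff_pos[of "a + 1" "b + 1" "a + b + 2" n] a_pos b_pos
    by (simp add: algebra_simps)
  then have "(\<Sum>n. ?d n * x ^ n) \<le> ?d 0 - 6 * ln (1 - x)"
    using assms a_pos b_pos by (intro suminf_le_ln summable_hyp2F1) auto
  then show ?thesis
    using kappa_pos by (simp add: W_def hyp2F1_eq_suminf mult_left_mono)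
qed

lemma F_le_G_ln:
  assumes "0 \<le> x" "x < 1"
  shows "F x \<le> 1 - G x * ln (1 - x)"
proof -
  define f where "f t = 1 - G t * ln (1 - t) - F t" for t
  have "f 0 \<le> f x"
  proof (rule DERIV_nonneg_imp_nondecreasing[OF assms(1)])
    fix t
    assume t: "0 \<le> t" "t \<le> x"
    then have t1: "\<bar>t\<bar> < 1" "t < 1"
      using assms by auto
    have "(f has_real_derivative 0 - (W t * ln (1 - t) + - 1 / (1 - t) * G t) - G t / (1 - t)) (at t)"
      unfolding f_def[abs_def]
      by (intro DERIV_diff DERIV_mult DERIV_const G_has_real_derivative F_has_real_derivative
          ln_one_minus_has_real_derivative t1)
    then have "(f has_real_derivative - W t * ln (1 - t)) (at t)"
      by (rule DERIV_cong) (simp add: field_simps)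
    moreover have "0 \<le> - W t * ln (1 - t)"
      using W_nonneg[of t] t t1 by (simp add: mult_nonneg_nonpos)
    ultimately show "\<exists>y. (f has_real_derivative y) (at t) \<and> 0 \<le> y"
      by blast
  qed
  then show ?thesis
    by (simp add: f_def)
qed

lemma F_ge_G_ln:
  assumes "0 \<le> x" "x < 1"
  shows "1 - G x * ln (1 - x) - 18 * \<kappa> \<le> F x"
proof -
  define P where "P t = 3 * t + 3 * (1 - t) * ln (1 - t) - (1 - t) * ln (1 - t) ^ 2" for t :: real
  define f where "f t = F t + G t * ln (1 - t) + 6 * \<kappa> * P t" for t
  have "f 0 \<le> f x"
  proof (rule DERIV_nonneg_imp_nondecreasing[OF assms(1)])
    fix t
    assume t: "0 \<le> t" "t \<le> x"
    then have t1: "\<bar>t\<bar> < 1" "t < 1"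
      using assms by auto
    have "(P has_real_derivative 3 * 1 + (3 * (0 - 1) * ln (1 - t) + - 1 / (1 - t) * (3 * (1 - t)))
       - ((0 - 1) * ln (1 - t) ^ 2 + (of_nat 2 * (- 1 / (1 - t) * ln (1 - t) ^ (2 - Suc 0))) * (1 - t)))
       (at t)"
      unfolding P_def[abs_def]
      by (intro DERIV_diff DERIV_add DERIV_mult DERIV_cmult DERIV_const DERIV_ident DERIV_power
          ln_one_minus_has_real_derivative t1)
    \<comment> \<open>\<open>P\<close> is the primitive of \<open>\<ell> + \<ell>\<^sup>2\<close>, \<open>\<ell> = - ln (1 - t)\<close>,
      vanishing at \<open>0\<close>.\<close>
    then have "(P has_real_derivative ln (1 - t) ^ 2 - ln (1 - t)) (at t)"
      by (rule DERIV_cong) (use t1 in \<open>simp add: divide_simps power2_eq_square\<close>)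
    then have "(f has_real_derivative G t / (1 - t) + (W t * ln (1 - t) + - 1 / (1 - t) * G t)
        + 6 * \<kappa> * (ln (1 - t) ^ 2 - ln (1 - t))) (at t)"
      unfolding f_def[abs_def]
      by (intro DERIV_add DERIV_mult DERIV_cmult G_has_real_derivative F_has_real_derivative
          ln_one_minus_has_real_derivative t1)
    then have "(f has_real_derivative W t * ln (1 - t) + 6 * \<kappa> * (ln (1 - t) ^ 2 - ln (1 - t))) (at t)"
      by (rule DERIV_cong) (simp add: field_simps)
    moreover have "0 \<le> W t * ln (1 - t) + 6 * \<kappa> * (ln (1 - t) ^ 2 - ln (1 - t))"
    proof -
      have "W t * - ln (1 - t) \<le> \<kappa> * (1 - 6 * ln (1 - t)) * - ln (1 - t)"
        using W_le_ln[of t] t t1 by (intro mult_right_mono) auto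
      also have "\<dots> \<le> 6 * \<kappa> * (ln (1 - t) ^ 2 - ln (1 - t))"
        using kappa_pos t t1 by (simp add: algebra_simps power2_eq_square mult_nonneg_nonpos)
      finally show ?thesis
        by simp
    qed
    ultimately show "\<exists>y. (f has_real_derivative y) (at t) \<and> 0 \<le> y"
      by blast
  qed
  moreover have "P x \<le> 3"
  proof -
    have "3 * (1 - x) * ln (1 - x) \<le> 0" "0 \<le> (1 - x) * ln (1 - x) ^ 2"
      using assms by (simp_all add: mult_nonneg_nonpos)
    then show ?thesis
      unfolding P_def using assms by linarith
  qed
  then have "6 * \<kappa> * P x \<le> 18 * \<kappa>"
    using kappa_pos by simp
  ultimately show ?thesis
    by (simp add: f_def P_def)
qed

lemma G_le_h_fun: "0 \<le> x \<Longrightarrow> x < 1 \<Longrightarrow> G x \<le> h_fun a b x"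
  using W_nonneg[of x] by (simp add: h_fun_eq)

lemma rho_le_h_fun: "0 \<le> x \<Longrightarrow> x < 1 \<Longrightarrow> \<rho> \<le> h_fun a b x"
  using G_le_h_fun rho_le_G by force

lemma h_fun_pos: "0 \<le> x \<Longrightarrow> x < 1 \<Longrightarrow> 0 < h_fun a b x"
  using rho_le_h_fun rho_pos by force

lemma Delta_fun_ge:
  assumes "0 \<le> x" "x < 1"
  shows "F x * x * ((1 - 2 * \<rho>)\<^sup>2 * \<rho> + 8 * \<kappa> * ((1 - a * b) / (a + b + 2))) \<le> Delta_fun a b x"
proof -
  define q \<theta> where "q = (1 - 2 * \<rho>)\<^sup>2" and "\<theta> = (1 - a * b) / (a + b + 2)"
  define H where "H = (1 - x) * W x"
  have F: "1 + \<rho> * x \<le> F x" "1 \<le> F x"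
    using F_ge_linear[OF assms] F_ge_one[OF assms] .
  have H: "H \<le> \<kappa> * (1 - \<theta> * x)"
    using one_minus_mult_W_le[OF assms] by (simp add: H_def \<theta>_def)
  have "(1 - 2 * \<rho>) * F x \<le> F x - 2 * G x"
    using G_le_rho_mult_F[OF assms] by (simp add: algebra_simps)
  moreover have "0 \<le> (1 - 2 * \<rho>) * F x"
    using rho_le_quarter F by simp
  ultimately have "q * (F x)\<^sup>2 \<le> (F x - 2 * G x)\<^sup>2"
    unfolding q_def power_mult_distrib[symmetric] by (intro power_mono) auto
  moreover have "x * (q * \<rho> + 8 * \<kappa> * \<theta>) \<le> q * F x - 8 * H"
  proof -
    have "x * (q * \<rho> + 8 * \<kappa> * \<theta>) \<le> (q - 8 * \<kappa>) + x * (q * \<rho> + 8 * \<kappa> * \<theta>)"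
      using eight_kappa_le by (simp add: q_def)
    also have "\<dots> = q * (1 + \<rho> * x) - 8 * (\<kappa> * (1 - \<theta> * x))"
      by (simp add: algebra_simps)
    also have "\<dots> \<le> q * F x - 8 * H"
      using F(1) H by (intro diff_mono mult_left_mono) (auto simp: q_def)
    finally show ?thesis .
  qed
  then have "F x * (x * (q * \<rho> + 8 * \<kappa> * \<theta>)) \<le> F x * (q * F x - 8 * H)"
    using F(2) by (intro mult_left_mono) auto
  ultimately show ?thesis
    unfolding Delta_fun_eq by (simp add: q_def \<theta>_def H_def power2_eq_square algebra_simps)
qed

lemma Delta_fun_pos:
  assumes "0 < x" "x < 1"
  shows "0 < Delta_fun a b x"
proof -
  have "0 < 8 * \<kappa> * ((1 - a * b) / (a + b + 2))"
    using kappa_pos ab_le_quarter a_pos b_pos by (intro mult_pos_pos divide_pos_pos) auto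
  moreover have "0 \<le> (1 - 2 * \<rho>)\<^sup>2 * \<rho>"
    using rho_pos by simp
  ultimately have "0 < (1 - 2 * \<rho>)\<^sup>2 * \<rho> + 8 * \<kappa> * ((1 - a * b) / (a + b + 2))"
    by linarith
  moreover have "0 < F x * x"
    using F_ge_one[of x] assms by simp
  ultimately have "0 < F x * x * ((1 - 2 * \<rho>)\<^sup>2 * \<rho> + 8 * \<kappa> * ((1 - a * b) / (a + b + 2)))"
    by simp
  also have "\<dots> \<le> Delta_fun a b x"
    using assms by (intro Delta_fun_ge) auto
  finally show ?thesis .
qed

lemma Delta_fun_nonneg:
  assumes "0 \<le> x" "x < 1"
  shows "0 \<le> Delta_fun a b x"
proof (cases "x = 0")
  case True
  then show ?thesis
    using eight_kappa_le by (simp add: Delta_fun_eq G_def W_def)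
next
  case False
  then show ?thesis
    using Delta_fun_pos[of x] assms by simp
qed

lemma F_le_minus_g_fun: "0 \<le> x \<Longrightarrow> x < 1 \<Longrightarrow> F x \<le> - g_fun a b x"
  using rho_le_G rho_pos by (force simp: g_fun_eq)

lemma quadratic_factorization:
  assumes "0 \<le> x" "x < 1"
  shows "h_fun a b x * y\<^sup>2 + g_fun a b x * y + 2 * F x
       = h_fun a b x * (y - omega_plus a b x) * (y - omega_minus a b x)"
proof -
  define g h D where "g = g_fun a b x" and "h = h_fun a b x" and "D = Delta_fun a b x"
  have "0 < h" "sqrt D * sqrt D = D"
    using h_fun_pos[OF assms] Delta_fun_nonneg[OF assms] by (simp_all add: h_def D_def)
  have "h * (y - (- g + sqrt D) / (2 * h)) * (y - (- g - sqrt D) / (2 * h))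
        = h * y\<^sup>2 + g * y + (g\<^sup>2 - sqrt D * sqrt D) / (4 * h)"
    using \<open>0 < h\<close> by (simp add: field_simps power2_eq_square)
  also have "(g\<^sup>2 - sqrt D * sqrt D) / (4 * h) = 2 * F x"
    using \<open>0 < h\<close> \<open>sqrt D * sqrt D = D\<close> by (simp add: D_def g_def h_def Delta_fun_def)
  finally show ?thesis
    unfolding omega_plus_def omega_minus_def g_def[symmetric] h_def[symmetric] D_def[symmetric] ..
qed

lemma sqrt_Delta_fun_less:
  assumes "0 \<le> x" "x < 1"
  shows "sqrt (Delta_fun a b x) < - g_fun a b x"
proof -
  have "0 < 8 * h_fun a b x * F x"
    using h_fun_pos[OF assms] F_ge_one[OF assms] by simp
  then have "Delta_fun a b x < (- g_fun a b x)\<^sup>2"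
    by (simp add: Delta_fun_def)
  moreover have "0 \<le> - g_fun a b x"
    using F_le_minus_g_fun[OF assms] F_ge_one[OF assms] by simp
  ultimately show ?thesis
    using real_sqrt_less_mono by fastforce
qed

lemma omega_minus_pos: "0 \<le> x \<Longrightarrow> x < 1 \<Longrightarrow> 0 < omega_minus a b x"
  unfolding omega_minus_def using sqrt_Delta_fun_less h_fun_pos by simp

lemma omega_minus_le_4:
  assumes "0 \<le> x" "x < 1"
  shows "omega_minus a b x \<le> 4"
proof -
  define g h D where "g = g_fun a b x" and "h = h_fun a b x" and "D = Delta_fun a b x"
  have "0 < h" "0 \<le> D" "1 \<le> F x" "F x \<le> - g" "sqrt D < - g" "0 \<le> sqrt D"
    using h_fun_pos[OF assms] Delta_fun_nonneg[OF assms] F_ge_one[OF assms]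
      F_le_minus_g_fun[OF assms] sqrt_Delta_fun_less[OF assms]
    by (simp_all add: g_def h_def D_def)
  \<comment> \<open>By Vieta the numerators of \<open>\<omega>\<^sub>\<plusminus>\<close> multiply to \<open>g\<^sup>2 - D = 8 h F\<close>;
    the larger one is at least \<open>F\<close>.\<close>
  have "F x \<le> - g + sqrt D" "0 \<le> - g - sqrt D"
    using \<open>F x \<le> - g\<close> \<open>sqrt D < - g\<close> \<open>0 \<le> sqrt D\<close> by linarith+
  then have "(- g - sqrt D) * F x \<le> (- g - sqrt D) * (- g + sqrt D)"
    by (rule mult_left_mono)
  also have "\<dots> = 8 * h * F x"
    using \<open>0 \<le> D\<close> by (simp add: D_def g_def h_def Delta_fun_def algebra_simps power2_eq_square)
  finally have "- g - sqrt D \<le> 8 * h"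
    using \<open>1 \<le> F x\<close> by simp
  then show ?thesis
    using \<open>0 < h\<close> by (simp add: omega_minus_def g_def h_def D_def divide_le_eq)
qed

lemma omega_plus_add_omega_minus:
  "0 \<le> x \<Longrightarrow> x < 1 \<Longrightarrow> omega_plus a b x + omega_minus a b x = - g_fun a b x / h_fun a b x"
  using h_fun_pos[of x] by (simp add: omega_plus_def omega_minus_def field_simps)

lemma omega_minus_le_omega_plus:
  assumes "0 \<le> x" "x < 1"
  shows "omega_minus a b x \<le> omega_plus a b x"
  unfolding omega_plus_def omega_minus_def
  using h_fun_pos[OF assms] Delta_fun_nonneg[OF assms] by (intro divide_right_mono) auto

lemma omega_minus_less_omega_plus: "0 < x \<Longrightarrow> x < 1 \<Longrightarrow> omega_minus a b x < omega_plus a b x"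
  unfolding omega_plus_def omega_minus_def
  using h_fun_pos[of x] Delta_fun_pos[of x] by (intro divide_strict_right_mono) auto

lemma phi_plus_le:
  assumes "0 \<le> x" "x < 1"
  shows "phi_plus a b x \<le> 2 + 1 / \<rho>"
proof -
  define h where "h = h_fun a b x"
  have h: "0 < h" "\<rho> \<le> h" "G x \<le> h"
    using h_fun_pos[OF assms] rho_le_h_fun[OF assms] G_le_h_fun[OF assms] by (simp_all add: h_def)
  have "0 \<le> G x" "0 \<le> - ln (1 - x)"
    using rho_le_G[OF assms] rho_pos assms by auto
  have "- g_fun a b x / h_fun a b x = (2 * G x + F x) / h"
    by (simp add: g_fun_eq h_def)
  then have "omega_plus a b x \<le> (2 * G x + F x) / h"
    using omega_plus_add_omega_minus[OF assms] omega_minus_pos[OF assms] by linarith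
  also have "\<dots> \<le> (2 * G x + 1 - G x * ln (1 - x)) / h"
    using F_le_G_ln[OF assms] h by (intro divide_right_mono) auto
  also have "\<dots> = 2 * (G x / h) + 1 / h + G x / h * - ln (1 - x)"
    using h by (simp add: field_simps)
  also have "\<dots> \<le> 2 * 1 + 1 / \<rho> + 1 * - ln (1 - x)"
    using h rho_pos \<open>0 \<le> G x\<close> \<open>0 \<le> - ln (1 - x)\<close>
    by (intro add_mono mult_left_mono mult_right_mono divide_left_mono) auto
  finally show ?thesis
    by (simp add: phi_plus_def)
qed

lemma phi_plus_ge:
  assumes "0 \<le> x" "x < 1"
  shows "- 4 - 43 * \<kappa> / \<rho> \<le> phi_plus a b x"
proof -
  define h l where "h = h_fun a b x" and "l = - ln (1 - x)"
  have h: "0 < h" "\<rho> \<le> h"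
    using h_fun_pos[OF assms] rho_le_h_fun[OF assms] by (simp_all add: h_def)
  have l: "0 \<le> l"
    using assms by (simp add: l_def)
  have "(1 - x) * W x * l \<le> 25 * \<kappa>"
  proof -
    have "(1 - x) * W x * l \<le> (1 - x) * (\<kappa> * (1 + 6 * l)) * l"
      using W_le_ln[OF assms] assms l by (intro mult_right_mono mult_left_mono) (auto simp: l_def)
    also have "\<dots> = \<kappa> * ((1 - x) * l + 6 * ((1 - x) * l\<^sup>2))"
      by (simp add: algebra_simps power2_eq_square)
    also have "\<dots> \<le> \<kappa> * (1 + 6 * 4)"
      using one_minus_mult_ln_le[OF assms] kappa_pos by (intro mult_left_mono) (auto simp: l_def)
    finally show ?thesis
      by simp
  qed
  moreover have "h * l = G x * l + (1 - x) * W x * l"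
    by (simp add: h_def h_fun_eq algebra_simps)
  ultimately have "h * l - 43 * \<kappa> \<le> F x"
    using F_ge_G_ln[OF assms] by (simp add: l_def)
  then have "(h * l - 43 * \<kappa>) / h \<le> F x / h"
    using h by (intro divide_right_mono) auto
  moreover have "(h * l - 43 * \<kappa>) / h = l - 43 * \<kappa> / h"
    using h by (simp add: field_simps)
  moreover have "43 * \<kappa> / h \<le> 43 * \<kappa> / \<rho>"
    using h rho_pos kappa_pos by (intro divide_left_mono) auto
  moreover have "F x / h \<le> (2 * G x + F x) / h"
    using rho_le_G[OF assms] rho_pos h by (intro divide_right_mono) auto
  moreover have "- g_fun a b x / h_fun a b x = (2 * G x + F x) / h"
    by (simp add: g_fun_eq h_def)
  then have "omega_plus a b x = (2 * G x + F x) / h - omega_minus a b x"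
    using omega_plus_add_omega_minus[OF assms] by linarith
  ultimately show ?thesis
    using omega_minus_le_4[OF assms] by (simp add: phi_plus_def l_def)
qed

lemma phi_minus_le: "0 \<le> x \<Longrightarrow> x < 1 \<Longrightarrow> phi_minus a b x \<le> ln (1 - x) + 4"
  using omega_minus_le_4 by (simp add: phi_minus_def)

lemma phi_minus_less_phi_plus: "0 < x \<Longrightarrow> x < 1 \<Longrightarrow> phi_minus a b x < phi_plus a b x"
  using omega_minus_less_omega_plus by (simp add: phi_minus_def phi_plus_def)

lemma phi_minus_0_pos: "0 < phi_minus a b 0"
  using omega_minus_pos[of 0] by (simp add: phi_minus_def)

lemma phi_plus_0_pos: "0 < phi_plus a b 0"
  using omega_minus_pos[of 0] omega_minus_le_omega_plus[of 0] by (simp add: phi_plus_def)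

lemma isCont_phi_plus: "0 \<le> x \<Longrightarrow> x < 1 \<Longrightarrow> isCont (phi_plus a b) x"
  and isCont_phi_minus: "0 \<le> x \<Longrightarrow> x < 1 \<Longrightarrow> isCont (phi_minus a b) x"
proof -
  assume x: "0 \<le> x" "x < 1"
  have "isCont (h_fun a b) x" "isCont (g_fun a b) x" "isCont (Delta_fun a b) x"
    unfolding h_fun_eq[abs_def] g_fun_eq[abs_def] Delta_fun_eq[abs_def]
    by (intro continuous_intros isCont_F isCont_G isCont_W; use x in simp)+
  then show "isCont (phi_plus a b) x" "isCont (phi_minus a b) x"
    unfolding phi_plus_def[abs_def] phi_minus_def[abs_def] omega_plus_def omega_minus_def
    by (intro continuous_intros; use x h_fun_pos[OF x] in simp)+
qed

lemma bdd_above_phi_plus: "bdd_above (phi_plus a b ` {0..<1})"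
  using phi_plus_le by (intro bdd_aboveI2[where M = "2 + 1 / \<rho>"]) auto

lemma bdd_below_phi_plus: "bdd_below (phi_plus a b ` {0..<1})"
  using phi_plus_ge by (intro bdd_belowI2[where m = "- 4 - 43 * \<kappa> / \<rho>"]) auto

lemma bdd_above_phi_minus: "bdd_above (phi_minus a b ` {0..<1})"
proof (intro bdd_aboveI2[where M = 4])
  fix x :: real
  assume "x \<in> {0..<1}"
  then have x: "0 \<le> x" "x < 1"
    by simp_all
  then have "ln (1 - x) \<le> 0"
    by simp
  then show "phi_minus a b x \<le> 4"
    using phi_minus_le[OF x] by linarith
qed

definition f_abc_deriv :: "real \<Rightarrow> real \<Rightarrow> real" where
  "f_abc_deriv c x = (G x * (c - ln (1 - x)) - F x) / ((1 - x) * (c - ln (1 - x))\<^sup>2)"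

definition f_abc_deriv2 :: "real \<Rightarrow> real \<Rightarrow> real" where
  "f_abc_deriv2 c x = (h_fun a b x * (c - ln (1 - x))\<^sup>2 + g_fun a b x * (c - ln (1 - x)) + 2 * F x)
     / ((1 - x)\<^sup>2 * (c - ln (1 - x)) ^ 3)"

lemma f_abc_has_real_derivative:
  assumes "\<bar>x\<bar> < 1" "c - ln (1 - x) \<noteq> 0"
  shows "(f_abc a b c has_real_derivative f_abc_deriv c x) (at x)"
proof -
  have x: "1 - x \<noteq> 0" "x < 1"
    using assms by auto
  have deriv: "((\<lambda>x. F x / (c - ln (1 - x))) has_real_derivative
      (G x / (1 - x) * (c - ln (1 - x)) - F x * (0 - - 1 / (1 - x))) / ((c - ln (1 - x)) * (c - ln (1 - x))))
      (at x)"
    by (intro DERIV_divide DERIV_diff DERIV_const F_has_real_derivative ln_one_minus_has_real_derivative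
        assms x(2))
  have alg: "(Gx / u * L - Fx * (0 - - 1 / u)) / (L * L) = (Gx * L - Fx) / (u * L\<^sup>2)"
    if "u \<noteq> 0" "L \<noteq> 0" for u L Gx Fx :: real
    using that by (simp add: field_simps power2_eq_square)
  show ?thesis
    using deriv unfolding alg[OF x(1) assms(2)] f_abc_def[abs_def] f_abc_deriv_def .
qed

lemma f_abc_deriv_has_real_derivative:
  assumes "\<bar>x\<bar> < 1" "c - ln (1 - x) \<noteq> 0"
  shows "(f_abc_deriv c has_real_derivative f_abc_deriv2 c x) (at x)"
proof -
  have x: "1 - x \<noteq> 0" "x < 1"
    using assms by auto
  have deriv: "(f_abc_deriv c has_real_derivative
      ((W x * (c - ln (1 - x)) + (0 - - 1 / (1 - x)) * G x - G x / (1 - x)) * ((1 - x) * (c - ln (1 - x))\<^sup>2)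
       - (G x * (c - ln (1 - x)) - F x)
         * ((0 - 1) * (c - ln (1 - x))\<^sup>2 + of_nat 2 * ((0 - - 1 / (1 - x)) * (c - ln (1 - x)) ^ (2 - Suc 0)) * (1 - x)))
      / ((1 - x) * (c - ln (1 - x))\<^sup>2 * ((1 - x) * (c - ln (1 - x))\<^sup>2))) (at x)"
    unfolding f_abc_deriv_def[abs_def]
    by (intro DERIV_divide DERIV_diff DERIV_mult DERIV_power DERIV_const DERIV_ident
        F_has_real_derivative G_has_real_derivative ln_one_minus_has_real_derivative assms x(2))
      (use assms x in simp)
  have alg:
    "((Wx * L + (0 - - 1 / u) * Gx - Gx / u) * (u * L\<^sup>2)
       - (Gx * L - Fx) * ((0 - 1) * L\<^sup>2 + of_nat 2 * ((0 - - 1 / u) * L ^ (2 - Suc 0)) * u))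
      / (u * L\<^sup>2 * (u * L\<^sup>2))
     = ((Gx + u * Wx) * L\<^sup>2 + - (2 * Gx + Fx) * L + 2 * Fx) / (u\<^sup>2 * L ^ 3)"
    if "u \<noteq> 0" "L \<noteq> 0" for u L Wx Gx Fx :: real
    using that by (simp add: field_simps power2_eq_square power3_eq_cube)
  show ?thesis
    using deriv unfolding alg[OF x(1) assms(2)] f_abc_deriv2_def h_fun_eq g_fun_eq .
qed

lemma f_abc_deriv2_nonneg_iff:
  assumes "0 \<le> x" "x < 1" "0 < c - ln (1 - x)"
  shows "0 \<le> f_abc_deriv2 c x \<longleftrightarrow> phi_plus a b x \<le> c \<or> c \<le> phi_minus a b x"
proof -
  have "0 < (1 - x)\<^sup>2 * (c - ln (1 - x)) ^ 3"
    using assms by simp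
  then have "0 \<le> f_abc_deriv2 c x \<longleftrightarrow>
      0 \<le> h_fun a b x * (c - ln (1 - x) - omega_plus a b x) * (c - ln (1 - x) - omega_minus a b x)"
    using assms by (simp add: f_abc_deriv2_def quadratic_factorization pos_le_divide_eq)
  also have "\<dots> \<longleftrightarrow> phi_plus a b x \<le> c \<or> c \<le> phi_minus a b x"
    using assms h_fun_pos omega_minus_le_omega_plus
    by (subst mult_roots_nonneg_iff) (auto simp: phi_plus_def phi_minus_def)
  finally show ?thesis .
qed

lemma f_abc_deriv2_nonpos_iff:
  assumes "0 \<le> x" "x < 1" "0 < c - ln (1 - x)"
  shows "f_abc_deriv2 c x \<le> 0 \<longleftrightarrow> phi_minus a b x \<le> c \<and> c \<le> phi_plus a b x"
proof -
  have "0 < (1 - x)\<^sup>2 * (c - ln (1 - x)) ^ 3"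
    using assms by simp
  then have "f_abc_deriv2 c x \<le> 0 \<longleftrightarrow>
      h_fun a b x * (c - ln (1 - x) - omega_plus a b x) * (c - ln (1 - x) - omega_minus a b x) \<le> 0"
    using assms by (simp add: f_abc_deriv2_def quadratic_factorization pos_divide_le_eq)
  also have "\<dots> \<longleftrightarrow> phi_minus a b x \<le> c \<and> c \<le> phi_plus a b x"
    using assms h_fun_pos omega_minus_le_omega_plus
    by (subst mult_roots_nonpos_iff) (auto simp: phi_plus_def phi_minus_def)
  finally show ?thesis .
qed

lemma f_abc_unbounded_at_pole:
  assumes "c \<le> 0" "1 - exp c < z" "z < 1"
  shows "\<not> bdd_above (f_abc a b c ` {1 - exp c..z})"
proof
  assume "bdd_above (f_abc a b c ` {1 - exp c..z})"
  then obtain M where M: "\<forall>y\<in>{1 - exp c..z}. f_abc a b c y \<le> M"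
    by (auto simp: bdd_above_def)
  have "ln (1 - z) < ln (exp c)"
    using assms by (subst ln_less_cancel_iff) auto
  then have "ln (1 - z) < c"
    by simp
  define e where "e = min (1 / (\<bar>M\<bar> + 1)) (c - ln (1 - z))"
  define y where "y = 1 - exp (c - e)"
  have e: "0 < e" "e \<le> c - ln (1 - z)" "e \<le> 1 / (\<bar>M\<bar> + 1)"
    using \<open>ln (1 - z) < c\<close> by (auto simp: e_def)
  have "exp (ln (1 - z)) \<le> exp (c - e)"
    using e(2) by simp
  then have y: "y \<in> {1 - exp c..z}" "0 \<le> y" "y < 1"
    using assms e(1) by (auto simp: y_def)
  \<comment> \<open>\<open>y\<close> is chosen so that the denominator \<open>c - ln (1 - y)\<close> of \<open>f_abc\<close> equals \<open>e\<close>.\<close>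
  have "1 / e \<le> f_abc a b c y"
    using F_ge_one[OF y(2,3)] e(1) by (simp add: f_abc_def y_def divide_right_mono)
  moreover have "\<bar>M\<bar> + 1 \<le> 1 / e"
    using e by (simp add: field_simps)
  ultimately show False
    using M y(1) by fastforce
qed

lemma not_convex_on_f_abc:
  assumes "c \<le> 0"
  shows "\<not> convex_on {0..<1} (f_abc a b c)"
proof
  define p q where "p = 1 - exp c" and "q = (1 - exp c + 1) / 2"
  have pq: "0 \<le> p" "p < q" "q < 1"
    using assms by (simp_all add: p_def q_def)
  assume "convex_on {0..<1} (f_abc a b c)"
  then have "convex_on {p..q} (f_abc a b c)"
    by (rule convex_on_subset) (use pq in auto)
  then show False
    using f_abc_unbounded_at_pole[OF assms, of q] convex_on_bdd_above_Icc pq by (simp add: p_def)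
qed

lemma not_concave_on_f_abc:
  assumes "c \<le> 0"
  shows "\<not> concave_on {0..<1} (f_abc a b c)"
proof
  define p z q where "p = 1 - exp c" and "z = (2 * (1 - exp c) + 1) / 3" and "q = (1 - exp c + 2) / 3"
  have pzq: "0 \<le> p" "p < z" "z < q" "q < 1"
    using assms by (simp_all add: p_def z_def q_def)
  assume "concave_on {0..<1} (f_abc a b c)"
  then have "concave_on {p..q} (f_abc a b c)"
    unfolding concave_on_def by (rule convex_on_subset) (use pzq in auto)
  then show False
    using f_abc_unbounded_at_pole[OF assms, of z] concave_on_bdd_above_Icc pzq by (simp add: p_def)
qed

lemma f_abc_derivatives:
  assumes "0 < c" "x \<in> {0..<1}"
  shows "(f_abc a b c has_real_derivative f_abc_deriv c x) (at x)"
    and "(f_abc_deriv c has_real_derivative f_abc_deriv2 c x) (at x)"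
    and "0 < c - ln (1 - x)"
proof -
  have "ln (1 - x) \<le> 0"
    using assms(2) by simp
  then show "0 < c - ln (1 - x)"
    using assms(1) by simp
  moreover have "\<bar>x\<bar> < 1"
    using assms(2) by simp
  ultimately show "(f_abc a b c has_real_derivative f_abc_deriv c x) (at x)"
    "(f_abc_deriv c has_real_derivative f_abc_deriv2 c x) (at x)"
    by (simp_all add: f_abc_has_real_derivative f_abc_deriv_has_real_derivative)
qed

lemma phi_plus_le_of_dichotomy:
  assumes branches: "\<And>x. x \<in> {0<..<1} \<Longrightarrow> phi_plus a b x \<le> c \<or> c \<le> phi_minus a b x"
    and "x \<in> {0..<1}"
  shows "phi_plus a b x \<le> c"
proof -
  define x0 where "x0 = 1 - exp (- (\<bar>c\<bar> + 5))"
  have "0 < x0" "x0 < 1"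
    by (simp_all add: x0_def)
  then have "phi_minus a b x0 \<le> ln (1 - x0) + 4"
    by (intro phi_minus_le) auto
  also have "\<dots> = - \<bar>c\<bar> - 1"
    by (simp add: x0_def)
  finally have x0: "x0 \<in> {0<..<1}" "phi_minus a b x0 < c"
    using \<open>0 < x0\<close> \<open>x0 < 1\<close> abs_ge_minus_self[of c] by auto
  have upper: "phi_plus a b x \<le> c" if "x \<in> {0<..<1}" for x
  proof (rule connected_upper_branch_le[where lo = "phi_minus a b", OF _ _ _ _ branches x0 that])
    show "continuous_on {0<..<1} (phi_minus a b)" "continuous_on {0<..<1} (phi_plus a b)"
      by (rule continuous_at_imp_continuous_on, use isCont_phi_minus isCont_phi_plus in force)+
    show "phi_minus a b y < phi_plus a b y" if "y \<in> {0<..<1}" for y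
      using that phi_minus_less_phi_plus by simp
  qed simp
  moreover have "phi_plus a b 0 \<le> c"
    by (rule isCont_le_at_left_endpoint[where q = 1]) (use upper isCont_phi_plus in auto)
  ultimately show ?thesis
    using assms(2) by (cases "x = 0") auto
qed

lemma convex_on_f_abc_iff:
  "convex_on {0..<1} (f_abc a b c) \<longleftrightarrow> (\<forall>x\<in>{0..<1}. phi_plus a b x \<le> c)"
proof (cases "c \<le> 0")
  case True
  moreover have "\<not> phi_plus a b 0 \<le> c"
    using True phi_plus_0_pos by linarith
  ultimately show ?thesis
    using not_convex_on_f_abc by (auto intro!: bexI[of _ 0])
next
  case False
  then have c: "0 < c"
    by simp
  show ?thesis
  proof
    assume convex: "convex_on {0..<1} (f_abc a b c)"
    have branches: "phi_plus a b x \<le> c \<or> c \<le> phi_minus a b x" if "x \<in> {0<..<1}" for x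
    proof -
      have "0 \<le> f_abc_deriv2 c x"
        by (rule convex_on_deriv2_nonneg[OF convex, where f' = "f_abc_deriv c"])
          (use that f_abc_derivatives[OF c] in auto)
      then show ?thesis
        using that f_abc_derivatives(3)[OF c] f_abc_deriv2_nonneg_iff by auto
    qed
    then show "\<forall>x\<in>{0..<1}. phi_plus a b x \<le> c"
      by (blast intro: phi_plus_le_of_dichotomy)
  next
    assume "\<forall>x\<in>{0..<1}. phi_plus a b x \<le> c"
    then show "convex_on {0..<1} (f_abc a b c)"
      using f_abc_derivatives[OF c] f_abc_deriv2_nonneg_iff
      by (intro f''_ge0_imp_convex[where f' = "f_abc_deriv c" and f'' = "f_abc_deriv2 c"]) auto
  qed
qed

lemma concave_on_f_abc_iff:
  "concave_on {0..<1} (f_abc a b c) \<longleftrightarrow> (\<forall>x\<in>{0..<1}. phi_minus a b x \<le> c \<and> c \<le> phi_plus a b x)"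
proof (cases "c \<le> 0")
  case True
  moreover have "\<not> phi_minus a b 0 \<le> c"
    using True phi_minus_0_pos by linarith
  ultimately show ?thesis
    using not_concave_on_f_abc by (auto intro!: bexI[of _ 0])
next
  case False
  then have c: "0 < c"
    by simp
  show ?thesis
  proof
    assume concave: "concave_on {0..<1} (f_abc a b c)"
    have between: "phi_minus a b x \<le> c \<and> c \<le> phi_plus a b x" if "x \<in> {0<..<1}" for x
    proof -
      have "f_abc_deriv2 c x \<le> 0"
        by (rule concave_on_deriv2_nonpos[OF concave, where f' = "f_abc_deriv c"])
          (use that f_abc_derivatives[OF c] in auto)
      then show ?thesis
        using that f_abc_derivatives(3)[OF c] f_abc_deriv2_nonpos_iff by auto
    qed
    moreover have "phi_minus a b 0 \<le> c"
      by (rule isCont_le_at_left_endpoint[where q = 1]) (use between isCont_phi_minus in auto)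
    moreover have "c \<le> phi_plus a b 0"
      by (rule isCont_ge_at_left_endpoint[where q = 1]) (use between isCont_phi_plus in auto)
    ultimately show "\<forall>x\<in>{0..<1}. phi_minus a b x \<le> c \<and> c \<le> phi_plus a b x"
      by (metis atLeastLessThan_iff greaterThanLessThan_iff order_le_less)
  next
    assume "\<forall>x\<in>{0..<1}. phi_minus a b x \<le> c \<and> c \<le> phi_plus a b x"
    then show "concave_on {0..<1} (f_abc a b c)"
      using f_abc_derivatives[OF c] f_abc_deriv2_nonpos_iff
      by (intro f''_le0_imp_concave[where f' = "f_abc_deriv c" and f'' = "f_abc_deriv2 c"]) auto
  qed
qed

end

theorem theorem2:
  fixes a b c :: real
  assumes "a > 0" and "b > 0" and "a + b \<le> 1"
  defines "\<alpha>0 \<equiv> (SUP x\<in>{0..<1}. phi_plus a b x)"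
      and "\<delta>m \<equiv> (SUP x\<in>{0..<1}. phi_minus a b x)"
      and "\<delta>p \<equiv> (INF x\<in>{0..<1}. phi_plus a b x)"
  shows "(convex_on {0..<1} (f_abc a b c) \<longleftrightarrow> c \<ge> \<alpha>0)
       \<and> (concave_on {0..<1} (f_abc a b c) \<longleftrightarrow> c \<in> {\<delta>m..\<delta>p})"
proof -
  interpret zero_balanced a b
    using assms by unfold_locales auto
  have "\<alpha>0 \<le> c \<longleftrightarrow> (\<forall>x\<in>{0..<1}. phi_plus a b x \<le> c)"
    unfolding \<alpha>0_def using bdd_above_phi_plus by (intro cSUP_le_iff) auto
  moreover have "\<delta>m \<le> c \<longleftrightarrow> (\<forall>x\<in>{0..<1}. phi_minus a b x \<le> c)"
    unfolding \<delta>m_def using bdd_above_phi_minus by (intro cSUP_le_iff) auto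
  moreover have "c \<le> \<delta>p \<longleftrightarrow> (\<forall>x\<in>{0..<1}. c \<le> phi_plus a b x)"
    unfolding \<delta>p_def using bdd_below_phi_plus by (intro le_cINF_iff) auto
  ultimately show ?thesis
    using convex_on_f_abc_iff[of c] concave_on_f_abc_iff[of c] by (simp add: ball_conj_distrib)
qed

end
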